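(* The elements appearing in a product of $\mathbf{PM}_k$ expressed in the fundamental basis form an interval for the $\leq_{\mathrm{M}}$-partial order. More precisely, for any $k$-packed matrices $M_1$ and $M_2$, $\mathbf{F}_{M_1} \cdot \mathbf{F}_{M_2} = \sum_{\mathrm{ov}(M_1, M_2) \leq_{\mathrm{M}} M \leq_{\mathrm{M}} \mathrm{un}(M_1, M_2)} \mathbf{F}_M$.
   Context: Let $k \geq 1$, $A_k := \{0,1,\dots,k\}$. A $k$-packed matrix of size $n$ is an $n\times n$ matrix with entries in $A_k$ with at least one nonzero entry in each row and column. $\mathbf{PM}_k$ has fundamental basis $(\mathbf{F}_M)$ indexed by $k$-packed matrices and product $\mathbf{F}_{M_1}\cdot\mathbf{F}_{M_2} = \sum_{M \in \mathrm{Sh}_c(M_1,M_2)} \mathbf{F}_M$, where, for sizes $n_1, n_2$, $\mathrm{Sh}_c(M_1,M_2)$ is the set of all matrices obtained by shuffling the columns of $M_1$ with an $n_2 \times n_1$ zero block placed below it, with the columns of $M_2$ with an $n_1 \times n_2$ zero block placed above it. $\mathrm{ov}(M_1,M_2) := \begin{pmatrix} M_1 & 0 \\ 0 & M_2\end{pmatrix}$ and $\mathrm{un}(M_1,M_2) := \begin{pmatrix} 0 & M_1 \\ M_2 & 0 \end{pmatrix}$. Define $\to$ on $k$-packed matrices of size $n$: $M_1 \to M_2$ if there is $i \in [n-1]$ such that, with $s$ the number of $0$ ending the $i$th column of $M_1$ and $p$ the number of $0$ starting its $(i+1)$st column, $s + p \geq n$ and $M_2$ is obtained by exchanging columns $i$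 and $i+1$ of $M_1$. $\leq_{\mathrm{M}}$ is the reflexive and transitive closure of $\to$. *)

theory Defs
  imports Main "HOL-Library.Multiset"
begin

text \<open>A square matrix of size n is represented as the list of its n columns,
  each column being a list of n natural numbers (read top to bottom).\<close>

type_synonym pmatrix = "nat list list"

definition msize :: "pmatrix \<Rightarrow> nat" where
  "msize M = length M"

definition square :: "pmatrix \<Rightarrow> bool" where
  "square M \<longleftrightarrow> (\<forall>c \<in> set M. length c = length M)"

definition packed :: "nat \<Rightarrow> pmatrix \<Rightarrow> bool" where
  "packed k M \<longleftrightarrow> square M
     \<and> (\<forall>c \<in> set M. \<forall>x \<in> set c. x \<le> k)
     \<and> (\<forall>c \<in> set M. \<exists>x \<in> set c. x \<noteq> 0)
     \<and> (\<forall>i < length M. \<exists>c \<in> set M. c ! i \<noteq> 0)"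

definition pad_below :: "pmatrix \<Rightarrow> pmatrix \<Rightarrow> pmatrix" where
  "pad_below M1 M2 = map (\<lambda>c. c @ replicate (length M2) 0) M1"

definition pad_above :: "pmatrix \<Rightarrow> pmatrix \<Rightarrow> pmatrix" where
  "pad_above M1 M2 = map (\<lambda>c. replicate (length M1) 0 @ c) M2"

definition ov :: "pmatrix \<Rightarrow> pmatrix \<Rightarrow> pmatrix" where
  "ov M1 M2 = pad_below M1 M2 @ pad_above M1 M2"

definition un :: "pmatrix \<Rightarrow> pmatrix \<Rightarrow> pmatrix" where
  "un M1 M2 = pad_above M1 M2 @ pad_below M1 M2"

fun merge :: "bool list \<Rightarrow> 'a list \<Rightarrow> 'a list \<Rightarrow> 'a list" where
  "merge [] xs ys = xs @ ys"
| "merge (True # bs) (x # xs) ys = x # merge bs xs ys"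
| "merge (True # bs) [] ys = merge bs [] ys"
| "merge (False # bs) xs (y # ys) = y # merge bs xs ys"
| "merge (False # bs) xs [] = merge bs xs []"

definition Sh_c :: "pmatrix \<Rightarrow> pmatrix \<Rightarrow> pmatrix multiset" where
  "Sh_c M1 M2 = image_mset (\<lambda>bs. merge bs (pad_below M1 M2) (pad_above M1 M2))
     (mset_set {bs. length bs = length M1 + length M2 \<and> count_list bs True = length M1})"

definition swap_cols :: "nat \<Rightarrow> pmatrix \<Rightarrow> pmatrix" where
  "swap_cols i M = M[i := M ! Suc i, Suc i := M ! i]"

text \<open>The elementary move (0-based column index i, i.e. columns i+1, i+2 in the paper).\<close>
definition move :: "nat \<Rightarrow> pmatrix \<Rightarrow> pmatrix \<Rightarrow> bool" where
  "move k M1 M2 \<longleftrightarrow> packed k M1 \<and> packed k M2 \<and> length M2 = length M1 \<and>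
     (\<exists>i. Suc i < length M1 \<and>
        length (takeWhile ((=) 0) (rev (M1 ! i)))
          + length (takeWhile ((=) 0) (M1 ! Suc i)) \<ge> length M1
        \<and> M2 = swap_cols i M1)"

definition leM :: "nat \<Rightarrow> pmatrix \<Rightarrow> pmatrix \<Rightarrow> bool" where
  "leM k = (move k)\<^sup>*\<^sup>*"

end

theory Submission
  imports Defs
begin

text \<open>Columns of \<open>ov M1 M2\<close> coming from \<open>M1\<close> end with \<open>n2\<close> zeros and those coming from
  \<open>M2\<close> start with \<open>n1\<close> zeros, so every column of the first kind may be exchanged with every column
  of the second kind: each column shuffle lies in the interval between \<open>ov M1 M2\<close> and \<open>un M1 M2\<close>.
  Conversely, a move exchanges two nonzero columns \<open>c, d\<close> of height \<open>n\<close> whose trailing zeros of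
  \<open>c\<close> and leading zeros of \<open>d\<close> add up to at least \<open>n\<close>, and then the reverse exchange is
  impossible. So a move either fixes the subsequence of \<open>M1\<close>-columns or strictly decreases the
  number of exchangeable pairs in it; as this subsequence is the same at both ends of the interval,
  it is constant along every path between them, and likewise for the \<open>M2\<close>-columns. Hence the
  interval consists of the shuffles, and distinct shuffle words give distinct matrices.\<close>

definition trailing_zeros :: "nat list \<Rightarrow> nat" where
  "trailing_zeros c = length (takeWhile ((=) 0) (rev c))"

definition leading_zeros :: "nat list \<Rightarrow> nat" where
  "leading_zeros c = length (takeWhile ((=) 0) c)"

definition exchangeable :: "nat \<Rightarrow> nat list \<Rightarrow> nat list \<Rightarrow> bool" where
  "exchangeable n c d \<longleftrightarrow> n \<le> trailing_zeros c + leading_zeros d"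

definition adj_exchange :: "nat \<Rightarrow> pmatrix \<Rightarrow> pmatrix \<Rightarrow> bool" where
  "adj_exchange n L L' \<longleftrightarrow>
     (\<exists>u c d v. L = u @ c # d # v \<and> L' = u @ d # c # v \<and> exchangeable n c d)"

lemma nth_takeWhile_prefix: "i < length (takeWhile P xs) \<Longrightarrow> P (xs ! i)"
  by (metis nth_mem set_takeWhileD takeWhile_nth)

lemma leading_plus_trailing_zeros_less:
  assumes "x \<in> set c" "x \<noteq> 0"
  shows "leading_zeros c + trailing_zeros c < length c"
proof -
  obtain i where i: "i < length c" "c ! i = x" using assms(1) by (auto simp: in_set_conv_nth)
  have "leading_zeros c \<le> i"
    using nth_takeWhile_prefix[of i "(=) 0" c] i assms(2) by (fastforce simp: leading_zeros_def)
  moreover have "rev c ! (length c - 1 - i) = x" using i by (simp add: rev_nth)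
  then have "trailing_zeros c \<le> length c - 1 - i"
    using nth_takeWhile_prefix[of "length c - 1 - i" "(=) 0" "rev c"] assms(2)
    by (fastforce simp: trailing_zeros_def)
  ultimately show ?thesis using i(1) by linarith
qed

lemma exchangeable_asym:
  assumes "exchangeable n c d" "length c = n" "length d = n"
    and "\<exists>x\<in>set c. x \<noteq> 0" "\<exists>y\<in>set d. y \<noteq> 0"
  shows "\<not> exchangeable n d c"
proof -
  obtain x y where "x \<in> set c" "x \<noteq> 0" "y \<in> set d" "y \<noteq> 0" using assms(4,5) by blast
  then show ?thesis
    using assms(1-3) leading_plus_trailing_zeros_less[of x c] leading_plus_trailing_zeros_less[of y d]
    by (simp add: exchangeable_def)
qed

lemma adj_exchange_mset: "adj_exchange n L L' \<Longrightarrow> mset L' = mset L"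
  by (auto simp: adj_exchange_def)

lemma adj_exchanges_mset: "(adj_exchange n)\<^sup>*\<^sup>* L L' \<Longrightarrow> mset L' = mset L"
  by (induction rule: rtranclp_induct) (auto dest: adj_exchange_mset)

lemma adj_exchange_Cons_Cons: "exchangeable n c d \<Longrightarrow> adj_exchange n (c # d # v) (d # c # v)"
  unfolding adj_exchange_def by (metis append_Nil)

lemma adj_exchanges_Cons:
  assumes "(adj_exchange n)\<^sup>*\<^sup>* L L'"
  shows "(adj_exchange n)\<^sup>*\<^sup>* (x # L) (x # L')"
proof -
  have "adj_exchange n (x # M) (x # M')" if "adj_exchange n M M'" for M M'
    using that unfolding adj_exchange_def by (metis append_Cons)
  with assms show ?thesis by (induction rule: rtranclp_induct) (auto intro: rtranclp.rtrancl_into_rtrancl)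
qed

lemma adj_exchanges_move_left:
  "\<forall>x\<in>set xs. exchangeable n x y \<Longrightarrow> (adj_exchange n)\<^sup>*\<^sup>* (xs @ y # zs) (y # xs @ zs)"
proof (induction xs)
  case (Cons x xs)
  then have "(adj_exchange n)\<^sup>*\<^sup>* (x # xs @ y # zs) (x # y # xs @ zs)"
    by (simp add: adj_exchanges_Cons)
  moreover have "adj_exchange n (x # y # xs @ zs) (y # x # xs @ zs)"
    using Cons.prems by (simp add: adj_exchange_Cons_Cons)
  ultimately show ?case by simp
qed simp

lemma adj_exchanges_move_right:
  "\<forall>y\<in>set ys. exchangeable n x y \<Longrightarrow> (adj_exchange n)\<^sup>*\<^sup>* (x # ys @ zs) (ys @ x # zs)"
proof (induction ys)
  case (Cons y ys)
  have "adj_exchange n (x # y # ys @ zs) (y # x # ys @ zs)"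
    using Cons.prems by (simp add: adj_exchange_Cons_Cons)
  moreover have "(adj_exchange n)\<^sup>*\<^sup>* (y # x # ys @ zs) (y # ys @ x # zs)"
    using Cons by (simp add: adj_exchanges_Cons)
  ultimately show ?case by (simp add: converse_rtranclp_into_rtranclp)
qed simp

lemma adj_exchanges_append_swap:
  "\<forall>x\<in>set xs. \<forall>y\<in>set ys. exchangeable n x y \<Longrightarrow> (adj_exchange n)\<^sup>*\<^sup>* (xs @ ys) (ys @ xs)"
proof (induction xs)
  case (Cons x xs)
  then have "(adj_exchange n)\<^sup>*\<^sup>* (x # xs @ ys) (x # ys @ xs)" by (simp add: adj_exchanges_Cons)
  moreover have "(adj_exchange n)\<^sup>*\<^sup>* (x # ys @ xs) (ys @ x # xs)"
    using Cons.prems by (simp add: adj_exchanges_move_right)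
  ultimately show ?case by simp
qed simp

lemma adj_exchanges_to_merge:
  "\<forall>x\<in>set xs. \<forall>y\<in>set ys. exchangeable n x y \<Longrightarrow> (adj_exchange n)\<^sup>*\<^sup>* (xs @ ys) (merge bs xs ys)"
proof (induction bs xs ys rule: merge.induct)
  case (4 bs xs y ys)
  have "(adj_exchange n)\<^sup>*\<^sup>* (xs @ y # ys) (y # xs @ ys)"
    using "4.prems" by (simp add: adj_exchanges_move_left)
  moreover have "(adj_exchange n)\<^sup>*\<^sup>* (y # xs @ ys) (y # merge bs xs ys)"
    using 4 by (simp add: adj_exchanges_Cons)
  ultimately show ?case by simp
qed (auto simp: adj_exchanges_Cons)

lemma adj_exchanges_from_merge:
  "\<forall>x\<in>set xs. \<forall>y\<in>set ys. exchangeable n x y \<Longrightarrow> (adj_exchange n)\<^sup>*\<^sup>* (merge bs xs ys) (ys @ xs)"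
proof (induction bs xs ys rule: merge.induct)
  case (1 xs ys)
  then show ?case by (simp add: adj_exchanges_append_swap)
next
  case (2 bs x xs ys)
  have "(adj_exchange n)\<^sup>*\<^sup>* (x # merge bs xs ys) (x # ys @ xs)"
    using 2 by (simp add: adj_exchanges_Cons)
  moreover have "(adj_exchange n)\<^sup>*\<^sup>* (x # ys @ xs) (ys @ x # xs)"
    using "2.prems" by (simp add: adj_exchanges_move_right)
  ultimately show ?case by simp
qed (auto simp: adj_exchanges_Cons)

lemma packed_mset:
  assumes "packed k L" "mset L' = mset L"
  shows "packed k L'"
proof -
  have "set L' = set L" "length L' = length L" using assms(2) by (metis mset_eq_setD, metis mset_eq_length)
  with assms(1) show ?thesis by (simp add: packed_def square_def)
qed

lemma swap_cols_split: "swap_cols (length u) (u @ c # d # v) = u @ d # c # v"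
  by (simp add: swap_cols_def nth_append list_update_append)

lemma adj_exchange_imp_move:
  assumes "adj_exchange (length L) L L'" "packed k L"
  shows "move k L L'"
proof -
  obtain u c d v where L: "L = u @ c # d # v" "L' = u @ d # c # v" "exchangeable (length L) c d"
    using assms(1) by (auto simp: adj_exchange_def)
  have "packed k L'" using assms packed_mset adj_exchange_mset by blast
  then show ?thesis unfolding move_def
    using assms(2) L swap_cols_split[of u c d v]
    by (intro conjI exI[of _ "length u"])
       (simp_all add: exchangeable_def trailing_zeros_def leading_zeros_def nth_append)
qed

lemma adj_exchanges_imp_leM:
  assumes "(adj_exchange (length L))\<^sup>*\<^sup>* L L'" "packed k L"
  shows "leM k L L'"
  using assms(1) unfolding leM_def
proof (induction rule: rtranclp_induct)
  case (step M M')
  have "mset M = mset L" using step.hyps(1) adj_exchanges_mset by blast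
  then have "packed k M" "length M = length L" using assms(2) packed_mset mset_eq_length by blast+
  then have "move k M M'" using step.hyps(2) adj_exchange_imp_move by metis
  with step.IH show ?case by (rule rtranclp.rtrancl_into_rtrancl)
qed simp

lemma move_imp_adj_exchange:
  assumes "move k L L'"
  obtains u c d v where "L = u @ c # d # v" "L' = u @ d # c # v"
    "exchangeable (length L) c d" "\<not> exchangeable (length L) d c"
proof -
  obtain i where i: "Suc i < length L" "L' = swap_cols i L"
    "length (takeWhile ((=) 0) (rev (L ! i))) + length (takeWhile ((=) 0) (L ! Suc i)) \<ge> length L"
    and packed: "packed k L" using assms unfolding move_def by blast
  define u c d v where "u = take i L" "c = L ! i" "d = L ! Suc i" "v = drop (Suc (Suc i)) L"
  have L: "L = u @ c # d # v"
    using i(1) unfolding u_c_d_v_def by (metis Cons_nth_drop_Suc Suc_lessD append_take_drop_id)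
  have "length u = i" using i(1) u_c_d_v_def by simp
  then have L': "L' = u @ d # c # v" using i(2) L swap_cols_split[of u c d v] by simp
  have cd: "exchangeable (length L) c d"
    using i(3) u_c_d_v_def by (simp add: exchangeable_def trailing_zeros_def leading_zeros_def)
  have "c \<in> set L" "d \<in> set L" using L by auto
  then have "length c = length L" "length d = length L" "\<exists>x\<in>set c. x \<noteq> 0" "\<exists>y\<in>set d. y \<noteq> 0"
    using packed unfolding packed_def square_def by blast+
  then have "\<not> exchangeable (length L) d c" using exchangeable_asym[OF cd] by blast
  with L L' cd that show ?thesis by blast
qed

fun inversions :: "nat \<Rightarrow> pmatrix \<Rightarrow> nat" where
  "inversions n [] = 0"
| "inversions n (c # L) = length (filter (exchangeable n c) L) + inversions n L"

lemma inversions_swap_less: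
  "exchangeable n c d \<Longrightarrow> \<not> exchangeable n d c \<Longrightarrow> inversions n (u @ d # c # v) < inversions n (u @ c # d # v)"
  by (induction u) auto

lemma move_filter:
  assumes "move k L L'"
  shows "filter P L' = filter P L \<or> inversions (length L) (filter P L') < inversions (length L) (filter P L)"
proof -
  obtain u c d v where L: "L = u @ c # d # v" "L' = u @ d # c # v"
    and cd: "exchangeable (length L) c d" "\<not> exchangeable (length L) d c"
    using move_imp_adj_exchange[OF assms] .
  show ?thesis
  proof (cases "P c \<and> P d")
    case True
    then show ?thesis using inversions_swap_less[OF cd, of "filter P u" "filter P v"] by (simp add: L)
  qed (auto simp: L)
qed

lemma moves_length: "(move k)\<^sup>*\<^sup>* L L' \<Longrightarrow> length L' = length L"
  by (induction rule: rtranclp_induct) (auto simp: move_def)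

lemma moves_filter:
  assumes "(move k)\<^sup>*\<^sup>* L L'"
  shows "filter P L' = filter P L \<or> inversions (length L) (filter P L') < inversions (length L) (filter P L)"
  using assms
proof (induction rule: rtranclp_induct)
  case (step M M')
  have "length M = length L" using step.hyps(1) moves_length by blast
  then show ?case using move_filter[OF step.hyps(2), of P] step.IH by auto
qed simp

lemma moves_filter_between:
  assumes "(move k)\<^sup>*\<^sup>* L M" "(move k)\<^sup>*\<^sup>* M N" "filter P N = filter P L"
  shows "filter P M = filter P L"
  using moves_filter[OF assms(1), of P] moves_filter[OF assms(2), of P] assms(3)
    moves_length[OF assms(1)] by (metis less_irrefl less_trans)

lemma merge_map_filter: "merge (map P xs) (filter P xs) (filter (\<lambda>x. \<not> P x) xs) = xs"
  by (induction xs) auto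

lemma map_merge:
  "length bs = length xs + length ys \<Longrightarrow> count_list bs True = length xs \<Longrightarrow>
   \<forall>x\<in>set xs. P x \<Longrightarrow> \<forall>y\<in>set ys. \<not> P y \<Longrightarrow> map P (merge bs xs ys) = bs"
proof (induction bs xs ys rule: merge.induct)
  case (3 bs ys)
  then show ?case by (simp add: count_list_0_iff)
next
  case (5 bs xs)
  then show ?case using count_le_length[of bs True] by (cases xs) (auto simp: count_list_0_iff)
qed auto

lemma inj_on_merge:
  assumes "\<forall>x\<in>set xs. P x" "\<forall>y\<in>set ys. \<not> P y"
  shows "inj_on (\<lambda>bs. merge bs xs ys)
           {bs. length bs = length xs + length ys \<and> count_list bs True = length xs}"
  by (rule inj_on_inverseI[where g = "map P"]) (use assms map_merge in blast)

lemma packed_ov: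
  assumes "packed k M1" "packed k M2"
  shows "packed k (ov M1 M2)"
  unfolding packed_def
proof (intro conjI allI impI)
  show "square (ov M1 M2)" "\<forall>c\<in>set (ov M1 M2). \<forall>x\<in>set c. x \<le> k"
    using assms by (auto simp: packed_def square_def ov_def pad_below_def pad_above_def)
  show "\<forall>c\<in>set (ov M1 M2). \<exists>x\<in>set c. x \<noteq> 0"
    using assms by (fastforce simp: packed_def ov_def pad_below_def pad_above_def)
  fix i assume i: "i < length (ov M1 M2)"
  show "\<exists>c\<in>set (ov M1 M2). c ! i \<noteq> 0"
  proof (cases "i < length M1")
    case True
    then obtain c where c: "c \<in> set M1" "c ! i \<noteq> 0" "length c = length M1"
      using assms(1) unfolding packed_def square_def by blast
    then have "(c @ replicate (length M2) 0) ! i \<noteq> 0" using True by (simp add: nth_append)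
    then show ?thesis using c(1) by (auto simp: ov_def pad_below_def)
  next
    case False
    then have "i - length M1 < length M2" using i by (simp add: ov_def pad_below_def pad_above_def)
    then obtain c where c: "c \<in> set M2" "c ! (i - length M1) \<noteq> 0"
      using assms(2) unfolding packed_def by blast
    then have "(replicate (length M1) 0 @ c) ! i \<noteq> 0" using False by (simp add: nth_append)
    then show ?thesis using c(1) by (auto simp: ov_def pad_above_def)
  qed
qed

lemma exchangeable_pad_below_pad_above:
  assumes "c \<in> set (pad_below M1 M2)" "d \<in> set (pad_above M1 M2)"
  shows "exchangeable (length M1 + length M2) c d"
proof -
  have "length M2 \<le> trailing_zeros c"
    using assms(1) by (auto simp: pad_below_def trailing_zeros_def takeWhile_append)
  moreover have "length M1 \<le> leading_zeros d"
    using assms(2) by (auto simp: pad_above_def leading_zeros_def takeWhile_append)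
  ultimately show ?thesis by (simp add: exchangeable_def)
qed

definition zero_below :: "nat \<Rightarrow> nat list \<Rightarrow> bool" where
  "zero_below m c \<longleftrightarrow> (\<forall>x\<in>set (drop m c). x = 0)"

lemma zero_below_pads:
  assumes "packed k M1" "packed k M2"
  shows "\<forall>c\<in>set (pad_below M1 M2). zero_below (length M1) c"
    and "\<forall>d\<in>set (pad_above M1 M2). \<not> zero_below (length M1) d"
  using assms by (auto simp: packed_def square_def zero_below_def pad_below_def pad_above_def)

lemma interval_eq_shuffles:
  assumes "packed k M1" "packed k M2"
  shows "{M. leM k (ov M1 M2) M \<and> leM k M (un M1 M2)} =
    (\<lambda>bs. merge bs (pad_below M1 M2) (pad_above M1 M2)) `
      {bs. length bs = length M1 + length M2 \<and> count_list bs True = length M1}"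
    (is "?I = ?f ` ?S")
proof -
  define A where "A = pad_below M1 M2"
  define B where "B = pad_above M1 M2"
  define P where "P = zero_below (length M1)"
  have ov: "ov M1 M2 = A @ B" and un: "un M1 M2 = B @ A" by (simp_all add: A_def B_def ov_def un_def)
  have len: "length (A @ B) = length M1 + length M2" by (simp add: A_def B_def pad_below_def pad_above_def)
  have PA: "\<forall>c\<in>set A. P c" and PB: "\<forall>d\<in>set B. \<not> P d"
    using zero_below_pads[OF assms] by (simp_all add: A_def B_def P_def)
  have exch: "\<forall>c\<in>set A. \<forall>d\<in>set B. exchangeable (length (A @ B)) c d"
    using exchangeable_pad_below_pad_above len by (simp add: A_def B_def)
  show ?thesis
  proof (intro equalityI subsetI)
    fix M assume "M \<in> ?I"
    then have from_ov: "(move k)\<^sup>*\<^sup>* (A @ B) M" and to_un: "(move k)\<^sup>*\<^sup>* M (B @ A)"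
      by (simp_all add: ov un leM_def)
    have "filter P M = A" "filter (\<lambda>c. \<not> P c) M = B"
      using moves_filter_between[OF from_ov to_un, of P] moves_filter_between[OF from_ov to_un, of "\<lambda>c. \<not> P c"]
        PA PB by simp_all
    then have "M = ?f (map P M)" using merge_map_filter[of P M] by (simp add: A_def B_def)
    moreover have "map P M \<in> ?S"
      using moves_length[OF from_ov] len \<open>filter P M = A\<close>
      by (simp add: count_list_eq_length_filter filter_map comp_def A_def B_def pad_below_def)
    ultimately show "M \<in> ?f ` ?S" by blast
  next
    fix M assume "M \<in> ?f ` ?S"
    then obtain bs where M: "M = merge bs A B" by (auto simp: A_def B_def)
    have "packed k (A @ B)" using packed_ov[OF assms] ov by simp
    moreover have from_ov: "(adj_exchange (length (A @ B)))\<^sup>*\<^sup>* (A @ B) M"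
      using adj_exchanges_to_merge[OF exch] M by simp
    moreover have "(adj_exchange (length M))\<^sup>*\<^sup>* M (B @ A)"
      using adj_exchanges_from_merge[OF exch] M mset_eq_length[OF adj_exchanges_mset[OF from_ov]]
      by simp
    ultimately show "M \<in> ?I"
      using adj_exchanges_imp_leM packed_mset adj_exchanges_mset by (metis ov un mem_Collect_eq)
  qed
qed

theorem proposition2p2:
  fixes k :: nat and M1 M2 :: pmatrix
  assumes "k \<ge> 1" and "packed k M1" and "packed k M2"
  shows "Sh_c M1 M2 = mset_set {M. leM k (ov M1 M2) M \<and> leM k M (un M1 M2)}"
proof -
  have "inj_on (\<lambda>bs. merge bs (pad_below M1 M2) (pad_above M1 M2))
          {bs. length bs = length M1 + length M2 \<and> count_list bs True = length M1}"
    using inj_on_merge[OF zero_below_pads[OF assms(2,3)]] by (simp add: pad_below_def pad_above_def)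
  then show ?thesis
    unfolding Sh_c_def interval_eq_shuffles[OF assms(2,3)] by (rule image_mset_mset_set)
qed

end
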